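(* Let an instance have $D_i>0$ for all $i\in\mathcal D$, and let $x$ be a minimum cost assignment in which every demand is entirely assigned to exactly one FC: for each $i$ there is a unique $j(i)\in\mathcal F$ with $x_{i\,j(i)}=D_i$ and $x_{ij}=0$ for $j\ne j(i)$. Define the weighted directed graph $\mathcal G_x$ on vertex set $\{r\}\cup\mathcal F\cup\mathcal D$ with: an arc $r\to j$ of weight $0$ for every $j\in\mathcal F$; an arc $j(i)\to i$ of weight $-\ell_{i\,j(i)}$ for every $i\in\mathcal D$; and an arc $i\to j$ of weight $\ell_{ij}$ for every $i\in\mathcal D$ and $j\in\mathcal F$ with $j\ne j(i)$. Then $\mathcal G_x$ has no negative-weight directed cycle. Let $-\beta_j$ (resp. $-\delta_i$) be the minimum weight of a directed path from $r$ to $j$ (resp. to $i$) in $\mathcal G_x$. Then $(x,\beta)$ is an equilibrium solution, $\delta_i=\min_{j}(\ell_{ij}+\beta_j)$ for every $i$, and for every equilibrium solution $(x',\beta')$ with delays $\delta'_i=\min_j(\ell_{ij}+\beta'_j)$ we have $\delta_i\le\delta'_i$ for all $i\in\mathcal D$. In particular $(x,\beta)$ is a minimum-delay equilibrium solution.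
   Context: An instance consists of finite sets $\mathcal D$ (demand nodes) and $\mathcal F$ (FCs), finite nonnegative travel times $\ell_{ij}$, demands $D_i\ge0$ and capacities $C_j\ge0$ with $\sum_iD_i\le\sum_jC_j$. An assignment is $x\in\mathbb R_{\ge0}^{\mathcal D\times\mathcal F}$ with $\sum_jx_{ij}=D_i$ for all $i$ and $\sum_ix_{ij}\le C_j$ for all $j$; a minimum cost assignment minimizes $\sum_{ij}\ell_{ij}x_{ij}$. An equilibrium solution is a pair $(x,\beta)$ with $x$ an assignment and $\beta\in\mathbb R^{\mathcal F}_{\ge0}$ such that $x_{ij}>0$ only if $j\in\arg\min_{j'}(\ell_{ij'}+\beta_{j'})$, and $\beta_j=0$ whenever $\sum_ix_{ij}<C_j$. The delay of demand $i$ is $\delta_i=\min_j(\ell_{ij}+\beta_j)$ and the delay of the solution is $\sum_iD_i\delta_i$. *)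

theory Defs
  imports Complex_Main
begin

text \<open>Demand nodes form a finite set Dm of type 'd, FCs a finite set F of type 'f.
  l i j is the travel time, D i the demand, C j the capacity.
  An assignment x is a function 'd => 'f => real, only its values on Dm x F matter.\<close>

definition is_assignment ::
  "'d set \<Rightarrow> 'f set \<Rightarrow> ('d \<Rightarrow> real) \<Rightarrow> ('f \<Rightarrow> real) \<Rightarrow> ('d \<Rightarrow> 'f \<Rightarrow> real) \<Rightarrow> bool" where
  "is_assignment Dm F D C x \<longleftrightarrow>
     (\<forall>i\<in>Dm. \<forall>j\<in>F. 0 \<le> x i j) \<and>
     (\<forall>i\<in>Dm. (\<Sum>j\<in>F. x i j) = D i) \<and>
     (\<forall>j\<in>F. (\<Sum>i\<in>Dm. x i j) \<le> C j)"

definition assignment_cost ::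
  "'d set \<Rightarrow> 'f set \<Rightarrow> ('d \<Rightarrow> 'f \<Rightarrow> real) \<Rightarrow> ('d \<Rightarrow> 'f \<Rightarrow> real) \<Rightarrow> real" where
  "assignment_cost Dm F l x = (\<Sum>i\<in>Dm. \<Sum>j\<in>F. l i j * x i j)"

definition is_min_cost_assignment ::
  "'d set \<Rightarrow> 'f set \<Rightarrow> ('d \<Rightarrow> 'f \<Rightarrow> real) \<Rightarrow> ('d \<Rightarrow> real) \<Rightarrow> ('f \<Rightarrow> real)
     \<Rightarrow> ('d \<Rightarrow> 'f \<Rightarrow> real) \<Rightarrow> bool" where
  "is_min_cost_assignment Dm F l D C x \<longleftrightarrow>
     is_assignment Dm F D C x \<and>
     (\<forall>y. is_assignment Dm F D C y \<longrightarrow> assignment_cost Dm F l x \<le> assignment_cost Dm F l y)"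

definition is_equilibrium ::
  "'d set \<Rightarrow> 'f set \<Rightarrow> ('d \<Rightarrow> 'f \<Rightarrow> real) \<Rightarrow> ('d \<Rightarrow> real) \<Rightarrow> ('f \<Rightarrow> real)
     \<Rightarrow> ('d \<Rightarrow> 'f \<Rightarrow> real) \<Rightarrow> ('f \<Rightarrow> real) \<Rightarrow> bool" where
  "is_equilibrium Dm F l D C x \<beta> \<longleftrightarrow>
     is_assignment Dm F D C x \<and>
     (\<forall>j\<in>F. 0 \<le> \<beta> j) \<and>
     (\<forall>i\<in>Dm. \<forall>j\<in>F. 0 < x i j \<longrightarrow> (\<forall>j'\<in>F. l i j + \<beta> j \<le> l i j' + \<beta> j')) \<and>
     (\<forall>j\<in>F. (\<Sum>i\<in>Dm. x i j) < C j \<longrightarrow> \<beta> j = 0)"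

definition delay :: "'f set \<Rightarrow> ('d \<Rightarrow> 'f \<Rightarrow> real) \<Rightarrow> ('f \<Rightarrow> real) \<Rightarrow> 'd \<Rightarrow> real" where
  "delay F l \<beta> i = Min ((\<lambda>j. l i j + \<beta> j) ` F)"

definition solution_delay ::
  "'d set \<Rightarrow> 'f set \<Rightarrow> ('d \<Rightarrow> 'f \<Rightarrow> real) \<Rightarrow> ('d \<Rightarrow> real) \<Rightarrow> ('f \<Rightarrow> real) \<Rightarrow> real" where
  "solution_delay Dm F l D \<beta> = (\<Sum>i\<in>Dm. D i * delay F l \<beta> i)"

text \<open>A weighted digraph (without parallel arcs) is given by a partial weight function:
  A u v = Some w iff there is an arc u -> v, of weight w.\<close>

type_synonym 'v wdigraph = "'v \<Rightarrow> 'v \<Rightarrow> real option"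

definition is_walk :: "'v wdigraph \<Rightarrow> 'v list \<Rightarrow> bool" where
  "is_walk A vs \<longleftrightarrow> vs \<noteq> [] \<and> (\<forall>k < length vs - 1. A (vs ! k) (vs ! Suc k) \<noteq> None)"

definition walk_weight :: "'v wdigraph \<Rightarrow> 'v list \<Rightarrow> real" where
  "walk_weight A vs = (\<Sum>k < length vs - 1. the (A (vs ! k) (vs ! Suc k)))"

definition is_path :: "'v wdigraph \<Rightarrow> 'v \<Rightarrow> 'v \<Rightarrow> 'v list \<Rightarrow> bool" where
  "is_path A u v vs \<longleftrightarrow> is_walk A vs \<and> hd vs = u \<and> last vs = v \<and> distinct vs"

definition is_cycle :: "'v wdigraph \<Rightarrow> 'v list \<Rightarrow> bool" where
  "is_cycle A vs \<longleftrightarrow> is_walk A vs \<and> 2 \<le> length vs \<and> hd vs = last vs \<and> distinct (tl vs)"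

definition no_negative_cycle :: "'v wdigraph \<Rightarrow> bool" where
  "no_negative_cycle A \<longleftrightarrow> (\<forall>vs. is_cycle A vs \<longrightarrow> 0 \<le> walk_weight A vs)"

definition min_path_weight :: "'v wdigraph \<Rightarrow> 'v \<Rightarrow> 'v \<Rightarrow> real" where
  "min_path_weight A u v = Min {walk_weight A p | p. is_path A u v p}"

datatype ('d, 'f) gvertex = Root | FC 'f | Dem 'd

text \<open>The graph G_x, where js i is the unique FC j(i) serving demand i.\<close>
definition Gx :: "'d set \<Rightarrow> 'f set \<Rightarrow> ('d \<Rightarrow> 'f \<Rightarrow> real) \<Rightarrow> ('d \<Rightarrow> 'f)
    \<Rightarrow> ('d, 'f) gvertex wdigraph" where
  "Gx Dm F l js u v =
     (case (u, v) of
        (Root, FC j) \<Rightarrow> if j \<in> F then Some 0 else None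
      | (FC j, Dem i) \<Rightarrow> if i \<in> Dm \<and> j = js i then Some (- l i j) else None
      | (Dem i, FC j) \<Rightarrow> if i \<in> Dm \<and> j \<in> F \<and> j \<noteq> js i then Some (l i j) else None
      | _ \<Rightarrow> None)"

end

theory Submission
  imports Defs
begin

text \<open>Pushing a small amount e of demand along a walk of G_x reassigns demand along the arcs
  Dem i \<rightarrow> FC j, withdraws it along the arcs FC j(i) \<rightarrow> Dem i, and changes the cost by e times
  the weight of the walk. For closed walks, and for paths from r to an FC with spare capacity,
  the perturbed assignment stays feasible when e is small, so minimality of x makes their
  weight nonnegative. This excludes negative cycles and forces \<beta>_j = 0 at FCs with spare
  capacity; the Bellman inequalities of shortest paths then give the equilibrium conditions and
  \<delta>_i = min_j (l_ij + \<beta>_j). Conversely, by LP duality a minimum cost assignment only uses FCs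
  that are cheapest under the prices \<beta>' of any equilibrium, so r \<mapsto> 0, FC j \<mapsto> \<beta>'_j,
  Dem i \<mapsto> \<delta>'_i is a feasible potential on G_x; it bounds path weights from below, whence
  \<beta> \<le> \<beta>' and \<delta> \<le> \<delta>'.\<close>

section \<open>Walks and shortest paths\<close>

lemma is_walk_Nil [simp]: "\<not> is_walk A []"
  by (simp add: is_walk_def)

lemma is_walk_single [simp]: "is_walk A [v]"
  by (simp add: is_walk_def)

lemma is_walk_Cons_Cons:
  "is_walk A (u # v # vs) \<longleftrightarrow> A u v \<noteq> None \<and> is_walk A (v # vs)"
  unfolding is_walk_def by (simp add: All_less_Suc2)

lemma walk_weight_single [simp]: "walk_weight A [v] = 0"
  by (simp add: walk_weight_def)

lemma walk_weight_Cons_Cons: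
  "walk_weight A (u # v # vs) = the (A u v) + walk_weight A (v # vs)"
  unfolding walk_weight_def by (simp only: length_Cons diff_Suc_1 sum.lessThan_Suc_shift nth_Cons_Suc nth_Cons_0)

lemma is_walk_append_Cons:
  "is_walk A (xs @ v # ys) \<longleftrightarrow> is_walk A (xs @ [v]) \<and> is_walk A (v # ys)"
  by (induction xs rule: induct_list012) (auto simp: is_walk_Cons_Cons)

lemma walk_weight_append_Cons:
  "walk_weight A (xs @ v # ys) = walk_weight A (xs @ [v]) + walk_weight A (v # ys)"
  by (induction xs rule: induct_list012) (auto simp: walk_weight_Cons_Cons)

lemma is_walk_snoc:
  "xs \<noteq> [] \<Longrightarrow> is_walk A (xs @ [v]) \<longleftrightarrow> is_walk A xs \<and> A (last xs) v \<noteq> None"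
  by (induction xs rule: induct_list012) (auto simp: is_walk_Cons_Cons)

lemma walk_weight_snoc:
  "xs \<noteq> [] \<Longrightarrow> walk_weight A (xs @ [v]) = walk_weight A xs + the (A (last xs) v)"
  by (induction xs rule: induct_list012) (auto simp: walk_weight_Cons_Cons)

lemma set_walk_subset_arc_heads:
  "is_walk A vs \<Longrightarrow> set vs \<subseteq> insert (hd vs) {v. \<exists>u. A u v \<noteq> None}"
  by (induction vs rule: induct_list012) (auto simp: is_walk_Cons_Cons)

lemma walk_weight_ge_potential_diff:
  assumes "is_walk A vs" and "\<And>u v w. A u v = Some w \<Longrightarrow> \<pi> u \<le> \<pi> v + w"
  shows "\<pi> (hd vs) - \<pi> (last vs) \<le> walk_weight A vs"
  using assms(1)
proof (induction vs rule: induct_list012)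
  case (3 u v vs)
  then obtain w where "A u v = Some w" and "is_walk A (v # vs)"
    by (auto simp: is_walk_Cons_Cons)
  with 3 assms(2)[of u v w] show ?case
    by (simp add: walk_weight_Cons_Cons)
qed simp_all

lemma finite_paths:
  assumes "finite {v. \<exists>u. A u v \<noteq> None}"
  shows "finite {p. is_path A s t p}"
proof (rule finite_subset)
  show "{p. is_path A s t p} \<subseteq> {p. set p \<subseteq> insert s {v. \<exists>u. A u v \<noteq> None} \<and> distinct p}"
    using set_walk_subset_arc_heads by (fastforce simp: is_path_def)
  show "finite {p. set p \<subseteq> insert s {v. \<exists>u. A u v \<noteq> None} \<and> distinct p}"
    using assms by (intro finite_subset_distinct) simp
qed

lemma min_path_weight_le:
  assumes "finite {v. \<exists>u. A u v \<noteq> None}" and "is_path A s t p"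
  shows "min_path_weight A s t \<le> walk_weight A p"
  unfolding min_path_weight_def
  using assms finite_paths[OF assms(1)] by (intro Min_le) auto

lemma min_path_weight_attained:
  assumes "finite {v. \<exists>u. A u v \<noteq> None}" and "is_path A s t p0"
  obtains p where "is_path A s t p" and "walk_weight A p = min_path_weight A s t"
proof -
  have "min_path_weight A s t \<in> {walk_weight A p | p. is_path A s t p}"
    unfolding min_path_weight_def
    using assms finite_paths[OF assms(1)] by (intro Min_in) auto
  then obtain p where "is_path A s t p" and "walk_weight A p = min_path_weight A s t"
    by auto
  then show thesis
    by (rule that)
qed

lemma min_path_weight_ge_potential_diff:
  assumes "finite {v. \<exists>u. A u v \<noteq> None}" and "is_path A s t p0"
    and "\<And>u v w. A u v = Some w \<Longrightarrow> \<pi> u \<le> \<pi> v + w"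
  shows "\<pi> s - \<pi> t \<le> min_path_weight A s t"
proof -
  obtain p where "is_path A s t p" and "walk_weight A p = min_path_weight A s t"
    using min_path_weight_attained[OF assms(1,2)] .
  with walk_weight_ge_potential_diff[OF _ assms(3)] show ?thesis
    by (fastforce simp: is_path_def)
qed

lemma min_path_weight_arc_le:
  assumes fin: "finite {v. \<exists>u. A u v \<noteq> None}" and nc: "no_negative_cycle A"
    and p: "is_path A s u p0" and arc: "A u v = Some w"
  shows "min_path_weight A s v \<le> min_path_weight A s u + w"
proof -
  obtain p where p: "is_path A s u p" and p_min: "walk_weight A p = min_path_weight A s u"
    using min_path_weight_attained[OF fin p] .
  then have p_walk: "is_walk A p" and p_ne: "p \<noteq> []" and "hd p = s" "last p = u" "distinct p"
    by (auto simp: is_path_def)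
  show ?thesis
  proof (cases "v \<in> set p")
    case False
    with p arc p_ne have "is_path A s v (p @ [v])"
      by (auto simp: is_path_def is_walk_snoc)
    from min_path_weight_le[OF fin this] show ?thesis
      using p_min p_ne arc \<open>last p = u\<close> by (simp add: walk_weight_snoc)
  next
    case True
    \<comment> \<open>Cut the path at v: the part after v closes up to a cycle through the arc u \<rightarrow> v.\<close>
    then obtain ys zs where p_split: "p = ys @ v # zs"
      by (meson split_list)
    have "hd (ys @ [v]) = hd p" and "last (v # zs) = u"
      using \<open>last p = u\<close> by (cases ys; simp add: p_split)+
    with p p_split is_walk_append_Cons[of A ys v zs] have "is_path A s v (ys @ [v])"
      by (auto simp: is_path_def)
    then have "min_path_weight A s v \<le> walk_weight A (ys @ [v])"
      by (rule min_path_weight_le[OF fin])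
    moreover have "is_walk A ((v # zs) @ [v])"
      using p_walk arc \<open>last (v # zs) = u\<close> is_walk_append_Cons[of A ys v zs]
      by (subst is_walk_snoc) (auto simp: p_split)
    then have "is_cycle A ((v # zs) @ [v])"
      using \<open>distinct p\<close> by (simp add: is_cycle_def p_split)
    then have "0 \<le> walk_weight A ((v # zs) @ [v])"
      using nc by (simp only: no_negative_cycle_def)
    then have "0 \<le> walk_weight A (v # zs) + w"
      using arc \<open>last (v # zs) = u\<close> walk_weight_snoc[of "v # zs" A v] by simp
    ultimately show ?thesis
      using p_min walk_weight_append_Cons[of A ys v zs] by (simp add: p_split)
  qed
qed

lemma min_path_weight_unique_pred:
  assumes fin: "finite {v. \<exists>u. A u v \<noteq> None}" and p: "is_path A s v p0" and "s \<noteq> v"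
    and pred: "\<And>u' w'. A u' v = Some w' \<Longrightarrow> u' = u \<and> w' = w"
  shows "min_path_weight A s u + w \<le> min_path_weight A s v"
proof -
  obtain p where p: "is_path A s v p" and p_min: "walk_weight A p = min_path_weight A s v"
    using min_path_weight_attained[OF fin p] .
  then obtain q where p_snoc: "p = q @ [v]"
    by (metis append_butlast_last_id is_path_def is_walk_Nil)
  with p \<open>s \<noteq> v\<close> have "q \<noteq> []"
    by (auto simp: is_path_def)
  with p p_snoc obtain w' where "A (last q) v = Some w'"
    by (auto simp: is_path_def is_walk_snoc)
  with pred have arc: "last q = u" "A u v = Some w"
    by auto
  with p p_snoc \<open>q \<noteq> []\<close> have "is_path A s u q"
    by (auto simp: is_path_def is_walk_snoc)
  from min_path_weight_le[OF fin this] show ?thesis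
    using p_min p_snoc \<open>q \<noteq> []\<close> arc by (simp add: walk_weight_snoc)
qed

section \<open>Delays and LP duality\<close>

lemma delay_le:
  "finite F \<Longrightarrow> j \<in> F \<Longrightarrow> delay F l \<beta> i \<le> l i j + \<beta> j"
  unfolding delay_def by (intro Min_le) auto

lemma delay_attained:
  assumes "finite F" and "F \<noteq> {}"
  obtains j where "j \<in> F" and "delay F l \<beta> i = l i j + \<beta> j"
proof -
  have "delay F l \<beta> i \<in> (\<lambda>j. l i j + \<beta> j) ` F"
    unfolding delay_def using assms by (intro Min_in) auto
  with that show thesis
    by blast
qed

lemma delay_eqI:
  assumes "finite F" and "j \<in> F" and "\<And>j'. j' \<in> F \<Longrightarrow> l i j + \<beta> j \<le> l i j' + \<beta> j'"
  shows "delay F l \<beta> i = l i j + \<beta> j"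
  unfolding delay_def using assms by (intro Min_eqI) auto

lemma assignment_cost_eq_dual_plus_slack:
  assumes "is_assignment Dm F D C y"
  shows "assignment_cost Dm F l y =
      (\<Sum>i\<in>Dm. D i * delay F l \<beta> i) - (\<Sum>j\<in>F. \<beta> j * C j)
      + (\<Sum>i\<in>Dm. \<Sum>j\<in>F. (l i j + \<beta> j - delay F l \<beta> i) * y i j)
      + (\<Sum>j\<in>F. \<beta> j * (C j - (\<Sum>i\<in>Dm. y i j)))"
proof -
  have "(\<Sum>i\<in>Dm. D i * delay F l \<beta> i) = (\<Sum>i\<in>Dm. delay F l \<beta> i * (\<Sum>j\<in>F. y i j))"
    using assms by (intro sum.cong) (simp_all add: is_assignment_def)
  also have "\<dots> = (\<Sum>i\<in>Dm. \<Sum>j\<in>F. delay F l \<beta> i * y i j)"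
    by (simp add: sum_distrib_left)
  moreover
  have "(\<Sum>j\<in>F. \<beta> j * (\<Sum>i\<in>Dm. y i j)) = (\<Sum>i\<in>Dm. \<Sum>j\<in>F. \<beta> j * y i j)"
    by (simp add: sum_distrib_left sum.swap[of _ F])
  ultimately show ?thesis
    unfolding assignment_cost_def
    by (simp add: algebra_simps sum.distrib sum_subtractf)
qed

lemma equilibrium_complementary_slackness:
  assumes "finite F" and "is_equilibrium Dm F l D C x \<beta>"
  shows "(\<Sum>i\<in>Dm. \<Sum>j\<in>F. (l i j + \<beta> j - delay F l \<beta> i) * x i j) = 0"
    and "(\<Sum>j\<in>F. \<beta> j * (C j - (\<Sum>i\<in>Dm. x i j))) = 0"
proof -
  have "(l i j + \<beta> j - delay F l \<beta> i) * x i j = 0" if "i \<in> Dm" "j \<in> F" for i j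
  proof (cases "0 < x i j")
    case True
    with assms that have "delay F l \<beta> i = l i j + \<beta> j"
      by (intro delay_eqI) (auto simp: is_equilibrium_def)
    then show ?thesis
      by simp
  next
    case False
    with assms that have "x i j = 0"
      by (force simp: is_equilibrium_def is_assignment_def)
    then show ?thesis
      by simp
  qed
  then show "(\<Sum>i\<in>Dm. \<Sum>j\<in>F. (l i j + \<beta> j - delay F l \<beta> i) * x i j) = 0"
    by (auto intro!: sum.neutral)
  have "\<beta> j * (C j - (\<Sum>i\<in>Dm. x i j)) = 0" if "j \<in> F" for j
    using assms that by (cases "(\<Sum>i\<in>Dm. x i j) < C j") (auto simp: is_equilibrium_def is_assignment_def)
  then show "(\<Sum>j\<in>F. \<beta> j * (C j - (\<Sum>i\<in>Dm. x i j))) = 0"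
    by (intro sum.neutral) blast
qed

lemma min_cost_assignment_uses_cheapest:
  assumes fin: "finite Dm" "finite F" and x: "is_min_cost_assignment Dm F l D C x"
    and eq: "is_equilibrium Dm F l D C x' \<beta>"
    and "i \<in> Dm" "j \<in> F" "0 < x i j"
  shows "l i j + \<beta> j = delay F l \<beta> i"
proof -
  define reduced where "reduced i j = l i j + \<beta> j - delay F l \<beta> i" for i j
  have x_asg: "is_assignment Dm F D C x" and x'_asg: "is_assignment Dm F D C x'"
    using x eq by (auto simp: is_min_cost_assignment_def is_equilibrium_def)
  have reduced_nonneg: "0 \<le> reduced i j" if "j \<in> F" for i j
    using delay_le[OF fin(2) that] by (simp add: reduced_def)
  have "assignment_cost Dm F l x \<le> assignment_cost Dm F l x'"
    using x x'_asg by (simp add: is_min_cost_assignment_def)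
  then have "(\<Sum>i\<in>Dm. \<Sum>j\<in>F. reduced i j * x i j) + (\<Sum>j\<in>F. \<beta> j * (C j - (\<Sum>i\<in>Dm. x i j))) \<le> 0"
    using assignment_cost_eq_dual_plus_slack[OF x_asg, of l \<beta>]
      assignment_cost_eq_dual_plus_slack[OF x'_asg, of l \<beta>] equilibrium_complementary_slackness[OF fin(2) eq]
    by (simp add: reduced_def)
  moreover have "0 \<le> (\<Sum>j\<in>F. \<beta> j * (C j - (\<Sum>i\<in>Dm. x i j)))"
    using eq x_asg by (intro sum_nonneg) (simp add: is_equilibrium_def is_assignment_def)
  moreover have "0 \<le> (\<Sum>i\<in>Dm. \<Sum>j\<in>F. reduced i j * x i j)"
    using x_asg reduced_nonneg by (intro sum_nonneg mult_nonneg_nonneg) (auto simp: is_assignment_def)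
  ultimately have "(\<Sum>i\<in>Dm. \<Sum>j\<in>F. reduced i j * x i j) = 0"
    by linarith
  then have "(\<Sum>j\<in>F. reduced i j * x i j) = 0"
    using fin x_asg reduced_nonneg \<open>i \<in> Dm\<close>
    by (subst (asm) sum_nonneg_eq_0_iff) (auto intro!: sum_nonneg simp: is_assignment_def)
  then have "reduced i j * x i j = 0"
    using fin x_asg reduced_nonneg \<open>i \<in> Dm\<close> \<open>j \<in> F\<close>
    by (subst (asm) sum_nonneg_eq_0_iff) (auto simp: is_assignment_def)
  with \<open>0 < x i j\<close> show ?thesis
    by (simp add: reduced_def)
qed

section \<open>Pushing demand along walks of G_x\<close>

lemma finite_pos_lower_bound:
  fixes S :: "real set"
  assumes "finite S" and "\<And>s. s \<in> S \<Longrightarrow> 0 < s"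
  obtains e where "0 < e" and "\<And>s. s \<in> S \<Longrightarrow> e \<le> s"
proof
  show "0 < Min (insert 1 S)"
    using assms by (subst Min_gr_iff) auto
  show "Min (insert 1 S) \<le> s" if "s \<in> S" for s
    using assms that by (intro Min_le) auto
qed

text \<open>The change of an assignment caused by pushing one unit along the arc u \<rightarrow> v of G_x:
  an arc Dem i \<rightarrow> FC j moves demand i onto j, an arc FC j \<rightarrow> Dem i takes it off j.\<close>

definition arc_flow :: "('d, 'f) gvertex \<Rightarrow> ('d, 'f) gvertex \<Rightarrow> 'd \<Rightarrow> 'f \<Rightarrow> real" where
  "arc_flow u v i j =
     (if u = Dem i \<and> v = FC j then 1 else if u = FC j \<and> v = Dem i then -1 else 0)"

fun walk_flow :: "('d, 'f) gvertex list \<Rightarrow> 'd \<Rightarrow> 'f \<Rightarrow> real" where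
  "walk_flow (u # v # vs) i j = arc_flow u v i j + walk_flow (v # vs) i j"
| "walk_flow _ i j = 0"

lemma walk_flow_ge: "- real (length vs) \<le> walk_flow vs i j"
  by (induction vs i j rule: walk_flow.induct) (auto simp: arc_flow_def)

locale single_sourced_min_cost =
  fixes Dm :: "'d set" and F :: "'f set" and l :: "'d \<Rightarrow> 'f \<Rightarrow> real"
    and D :: "'d \<Rightarrow> real" and C :: "'f \<Rightarrow> real"
    and x :: "'d \<Rightarrow> 'f \<Rightarrow> real" and js :: "'d \<Rightarrow> 'f"
  assumes finite_Dm: "finite Dm" and finite_F: "finite F"
    and D_pos: "\<And>i. i \<in> Dm \<Longrightarrow> 0 < D i"
    and min_cost: "is_min_cost_assignment Dm F l D C x"
    and js_in_F: "\<And>i. i \<in> Dm \<Longrightarrow> js i \<in> F"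
    and x_js: "\<And>i. i \<in> Dm \<Longrightarrow> x i (js i) = D i"
    and x_other: "\<And>i j. i \<in> Dm \<Longrightarrow> j \<in> F \<Longrightarrow> j \<noteq> js i \<Longrightarrow> x i j = 0"
begin

abbreviation G :: "('d, 'f) gvertex wdigraph" where
  "G \<equiv> Gx Dm F l js"

lemma x_assignment: "is_assignment Dm F D C x"
  using min_cost by (simp add: is_min_cost_assignment_def)

lemma G_arcE:
  assumes "G u v = Some w"
  obtains (root) j where "j \<in> F" "u = Root" "v = FC j" "w = 0"
  | (serve) i where "i \<in> Dm" "u = FC (js i)" "v = Dem i" "w = - l i (js i)"
  | (switch) i j where "i \<in> Dm" "j \<in> F" "j \<noteq> js i" "u = Dem i" "v = FC j" "w = l i j"
  using assms by (cases u; cases v) (auto simp: Gx_def split: if_splits)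

lemma G_Root_FC: "j \<in> F \<Longrightarrow> G Root (FC j) = Some 0"
  by (simp add: Gx_def)

lemma G_FC_Dem: "i \<in> Dm \<Longrightarrow> G (FC (js i)) (Dem i) = Some (- l i (js i))"
  by (simp add: Gx_def)

lemma G_Dem_FC: "i \<in> Dm \<Longrightarrow> j \<in> F \<Longrightarrow> j \<noteq> js i \<Longrightarrow> G (Dem i) (FC j) = Some (l i j)"
  by (simp add: Gx_def)

lemma finite_arc_heads_G: "finite {v. \<exists>u. G u v \<noteq> None}"
proof (rule finite_subset)
  show "{v. \<exists>u. G u v \<noteq> None} \<subseteq> FC ` F \<union> Dem ` Dm"
    by (auto elim: G_arcE)
qed (simp add: finite_Dm finite_F)

lemma arc_flow_cost:
  assumes "G u v = Some w"
  shows "(\<Sum>i\<in>Dm. \<Sum>j\<in>F. l i j * arc_flow u v i j) = w"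
  using assms
proof (cases rule: G_arcE)
  case (serve i)
  then have "(\<Sum>i'\<in>Dm. \<Sum>j\<in>F. l i' j * arc_flow u v i' j) = (\<Sum>i'\<in>Dm. if i' = i then - l i (js i) else 0)"
    using js_in_F finite_F by (intro sum.cong) (auto simp: arc_flow_def if_distrib cong: if_cong)
  with serve show ?thesis
    using finite_Dm by simp
next
  case (switch i j)
  then have "(\<Sum>i'\<in>Dm. \<Sum>j'\<in>F. l i' j' * arc_flow u v i' j') = (\<Sum>i'\<in>Dm. if i' = i then l i j else 0)"
    using finite_F by (intro sum.cong) (auto simp: arc_flow_def if_distrib cong: if_cong)
  with switch show ?thesis
    using finite_Dm by simp
qed (simp add: arc_flow_def)

lemma arc_flow_row:
  assumes "G u v = Some w" and "i \<in> Dm"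
  shows "(\<Sum>j\<in>F. arc_flow u v i j) = of_bool (u = Dem i) - of_bool (v = Dem i)"
  using assms(1) by (cases rule: G_arcE) (use assms(2) js_in_F finite_F in \<open>auto simp: arc_flow_def cong: if_cong\<close>)

lemma arc_flow_col:
  assumes "G u v = Some w" and "j \<in> F"
  shows "(\<Sum>i\<in>Dm. arc_flow u v i j) \<le> of_bool (v = FC j) - of_bool (u = FC j)"
  using assms(1) by (cases rule: G_arcE) (use assms(2) finite_Dm in \<open>auto simp: arc_flow_def cong: if_cong\<close>)

lemma arc_flow_nonneg:
  assumes "G u v = Some w" and "j \<noteq> js i"
  shows "0 \<le> arc_flow u v i j"
  using assms(1) by (cases rule: G_arcE) (use assms(2) in \<open>auto simp: arc_flow_def cong: if_cong\<close>)

lemma walk_flow_cost: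
  "is_walk G vs \<Longrightarrow> (\<Sum>i\<in>Dm. \<Sum>j\<in>F. l i j * walk_flow vs i j) = walk_weight G vs"
proof (induction vs rule: induct_list012)
  case (3 u v vs)
  then obtain w where "G u v = Some w" and "is_walk G (v # vs)"
    by (auto simp: is_walk_Cons_Cons)
  with 3 arc_flow_cost show ?case
    by (simp add: walk_weight_Cons_Cons distrib_left sum.distrib)
qed simp_all

lemma walk_flow_row:
  "is_walk G vs \<Longrightarrow> i \<in> Dm \<Longrightarrow>
     (\<Sum>j\<in>F. walk_flow vs i j) = of_bool (hd vs = Dem i) - of_bool (last vs = Dem i)"
proof (induction vs rule: induct_list012)
  case (3 u v vs)
  then obtain w where "G u v = Some w" and "is_walk G (v # vs)"
    by (auto simp: is_walk_Cons_Cons)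
  with 3 arc_flow_row show ?case
    by (simp add: sum.distrib)
qed simp_all

lemma walk_flow_col:
  "is_walk G vs \<Longrightarrow> j \<in> F \<Longrightarrow>
     (\<Sum>i\<in>Dm. walk_flow vs i j) \<le> of_bool (last vs = FC j) - of_bool (hd vs = FC j)"
proof (induction vs rule: induct_list012)
  case (3 u v vs)
  then obtain w where "G u v = Some w" and "is_walk G (v # vs)"
    by (auto simp: is_walk_Cons_Cons)
  with 3 arc_flow_col[of u v w j] show ?case
    by (simp add: sum.distrib)
qed simp_all

lemma walk_flow_nonneg:
  "is_walk G vs \<Longrightarrow> j \<noteq> js i \<Longrightarrow> 0 \<le> walk_flow vs i j"
proof (induction vs rule: induct_list012)
  case (3 u v vs)
  then obtain w where "G u v = Some w" and "is_walk G (v # vs)"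
    by (auto simp: is_walk_Cons_Cons)
  with 3 arc_flow_nonneg[of u v w j i] show ?case
    by simp
qed simp_all

lemma assignment_cost_push_walk:
  "is_walk G vs \<Longrightarrow>
     assignment_cost Dm F l (\<lambda>i j. x i j + e * walk_flow vs i j)
       = assignment_cost Dm F l x + e * walk_weight G vs"
  by (simp add: assignment_cost_def walk_flow_cost[symmetric] algebra_simps sum.distrib sum_distrib_left)

lemma is_assignment_push_walk:
  fixes e :: real
  assumes walk: "is_walk G vs" and "0 \<le> e"
    and small: "\<And>i. i \<in> Dm \<Longrightarrow> e * real (length vs) \<le> D i"
    and rows: "\<And>i. i \<in> Dm \<Longrightarrow> hd vs = Dem i \<longleftrightarrow> last vs = Dem i"
    and cols: "\<And>j. j \<in> F \<Longrightarrow> last vs = FC j \<Longrightarrow> hd vs \<noteq> FC j \<Longrightarrow> (\<Sum>i\<in>Dm. x i j) + e \<le> C j"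
  shows "is_assignment Dm F D C (\<lambda>i j. x i j + e * walk_flow vs i j)"
  unfolding is_assignment_def
proof (intro conjI ballI)
  fix i j assume "i \<in> Dm" "j \<in> F"
  show "0 \<le> x i j + e * walk_flow vs i j"
  proof (cases "j = js i")
    case True
    have "e * - real (length vs) \<le> e * walk_flow vs i j"
      using walk_flow_ge \<open>0 \<le> e\<close> by (rule mult_left_mono)
    with small[OF \<open>i \<in> Dm\<close>] x_js[OF \<open>i \<in> Dm\<close>] True show ?thesis
      by simp
  next
    case False
    with walk \<open>0 \<le> e\<close> x_assignment \<open>i \<in> Dm\<close> \<open>j \<in> F\<close> show ?thesis
      by (simp add: walk_flow_nonneg is_assignment_def)
  qed
next
  fix i assume "i \<in> Dm"
  with walk_flow_row[OF walk this] rows x_assignment show "(\<Sum>j\<in>F. x i j + e * walk_flow vs i j) = D i"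
    by (simp add: sum.distrib is_assignment_def flip: sum_distrib_left)
next
  fix j assume "j \<in> F"
  have "e * (\<Sum>i\<in>Dm. walk_flow vs i j) \<le> e * (of_bool (last vs = FC j) - of_bool (hd vs = FC j))"
    using walk_flow_col[OF walk \<open>j \<in> F\<close>] \<open>0 \<le> e\<close> by (rule mult_left_mono)
  moreover have "(\<Sum>i\<in>Dm. x i j) \<le> C j"
    using x_assignment \<open>j \<in> F\<close> by (simp add: is_assignment_def)
  ultimately show "(\<Sum>i\<in>Dm. x i j + e * walk_flow vs i j) \<le> C j"
    using cols[OF \<open>j \<in> F\<close>] \<open>0 \<le> e\<close>
    by (cases "last vs = FC j"; cases "hd vs = FC j") (simp_all add: sum.distrib flip: sum_distrib_left)
qed

lemma walk_weight_nonneg: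
  assumes walk: "is_walk G vs"
    and rows: "\<And>i. i \<in> Dm \<Longrightarrow> hd vs = Dem i \<longleftrightarrow> last vs = Dem i"
    and slack: "\<And>j. j \<in> F \<Longrightarrow> last vs = FC j \<Longrightarrow> hd vs \<noteq> FC j \<Longrightarrow> (\<Sum>i\<in>Dm. x i j) < C j"
  shows "0 \<le> walk_weight G vs"
proof -
  have len: "0 < real (length vs)"
    using walk by (cases vs) auto
  define bounds where "bounds = (\<lambda>i. D i / length vs) ` Dm
    \<union> (\<lambda>j. C j - (\<Sum>i\<in>Dm. x i j)) ` {j\<in>F. (\<Sum>i\<in>Dm. x i j) < C j}"
  have "finite bounds" and "\<And>s. s \<in> bounds \<Longrightarrow> 0 < s"
    using finite_Dm finite_F D_pos len by (auto simp: bounds_def)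
  then obtain e where "0 < e" and e_le: "\<And>s. s \<in> bounds \<Longrightarrow> e \<le> s"
    using finite_pos_lower_bound[of bounds] by blast
  have "is_assignment Dm F D C (\<lambda>i j. x i j + e * walk_flow vs i j)"
  proof (rule is_assignment_push_walk[OF walk])
    show "e * real (length vs) \<le> D i" if "i \<in> Dm" for i
      using e_le[of "D i / length vs"] that len by (simp add: bounds_def pos_le_divide_eq)
    show "(\<Sum>i\<in>Dm. x i j) + e \<le> C j" if "j \<in> F" "last vs = FC j" "hd vs \<noteq> FC j" for j
      using e_le[of "C j - (\<Sum>i\<in>Dm. x i j)"] slack[OF that] that by (auto simp: bounds_def)
  qed (use \<open>0 < e\<close> rows in auto)
  with min_cost have "assignment_cost Dm F l x \<le> assignment_cost Dm F l (\<lambda>i j. x i j + e * walk_flow vs i j)"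
    unfolding is_min_cost_assignment_def by blast
  then have "0 \<le> e * walk_weight G vs"
    by (simp add: assignment_cost_push_walk[OF walk])
  with \<open>0 < e\<close> show ?thesis
    by (simp add: zero_le_mult_iff)
qed

lemma no_negative_cycle_G: "no_negative_cycle G"
  unfolding no_negative_cycle_def is_cycle_def
  by (auto intro: walk_weight_nonneg)

section \<open>Shortest path prices\<close>

definition beta_G :: "'f \<Rightarrow> real" where
  "beta_G j = - min_path_weight G Root (FC j)"

definition delta_G :: "'d \<Rightarrow> real" where
  "delta_G i = - min_path_weight G Root (Dem i)"

lemma path_Root_FC: "j \<in> F \<Longrightarrow> is_path G Root (FC j) [Root, FC j]"
  by (simp add: is_path_def is_walk_Cons_Cons G_Root_FC)

lemma path_Root_Dem: "i \<in> Dm \<Longrightarrow> is_path G Root (Dem i) [Root, FC (js i), Dem i]"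
  by (simp add: is_path_def is_walk_Cons_Cons G_Root_FC G_FC_Dem js_in_F)

lemma beta_G_nonneg: "j \<in> F \<Longrightarrow> 0 \<le> beta_G j"
  using min_path_weight_le[OF finite_arc_heads_G path_Root_FC]
  by (simp add: beta_G_def walk_weight_Cons_Cons G_Root_FC)

lemma delta_G_eq:
  assumes "i \<in> Dm"
  shows "delta_G i = l i (js i) + beta_G (js i)"
proof -
  have "min_path_weight G Root (Dem i) \<le> min_path_weight G Root (FC (js i)) - l i (js i)"
    using min_path_weight_arc_le[OF finite_arc_heads_G no_negative_cycle_G path_Root_FC G_FC_Dem] assms
    by (simp add: js_in_F)
  moreover have "min_path_weight G Root (FC (js i)) - l i (js i) \<le> min_path_weight G Root (Dem i)"
  proof -
    have "u' = FC (js i) \<and> w' = - l i (js i)" if "G u' (Dem i) = Some w'" for u' w'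
      using that by (cases rule: G_arcE) auto
    from min_path_weight_unique_pred[OF finite_arc_heads_G path_Root_Dem[OF \<open>i \<in> Dm\<close>] _ this]
    show ?thesis
      by simp
  qed
  ultimately show ?thesis
    by (simp add: delta_G_def beta_G_def)
qed

lemma delta_G_le:
  assumes "i \<in> Dm" and "j \<in> F"
  shows "delta_G i \<le> l i j + beta_G j"
proof (cases "j = js i")
  case True
  with delta_G_eq[OF \<open>i \<in> Dm\<close>] show ?thesis
    by simp
next
  case False
  with min_path_weight_arc_le[OF finite_arc_heads_G no_negative_cycle_G
      path_Root_Dem[OF \<open>i \<in> Dm\<close>] G_Dem_FC[OF assms False]]
  show ?thesis
    by (simp add: delta_G_def beta_G_def)
qed

lemma delta_G_eq_delay:
  assumes "i \<in> Dm"
  shows "delta_G i = delay F l beta_G i"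
proof -
  have "delay F l beta_G i = l i (js i) + beta_G (js i)"
    using assms delta_G_le[OF assms] by (intro delay_eqI) (simp_all add: finite_F js_in_F delta_G_eq)
  with delta_G_eq[OF assms] show ?thesis
    by simp
qed

lemma beta_G_eq_0_if_slack:
  assumes "j \<in> F" and "(\<Sum>i\<in>Dm. x i j) < C j"
  shows "beta_G j = 0"
proof -
  obtain p where p: "is_path G Root (FC j) p" and "walk_weight G p = min_path_weight G Root (FC j)"
    using min_path_weight_attained[OF finite_arc_heads_G path_Root_FC[OF \<open>j \<in> F\<close>]] .
  moreover have "0 \<le> walk_weight G p"
    using p assms by (intro walk_weight_nonneg) (auto simp: is_path_def)
  ultimately show ?thesis
    using beta_G_nonneg[OF \<open>j \<in> F\<close>] by (simp add: beta_G_def)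
qed

lemma equilibrium_beta_G: "is_equilibrium Dm F l D C x beta_G"
  unfolding is_equilibrium_def
proof (intro conjI ballI impI)
  fix i j j' assume "i \<in> Dm" "j \<in> F" "0 < x i j" "j' \<in> F"
  then have "j = js i"
    using x_other by fastforce
  with delta_G_eq[OF \<open>i \<in> Dm\<close>] delta_G_le[OF \<open>i \<in> Dm\<close> \<open>j' \<in> F\<close>]
  show "l i j + beta_G j \<le> l i j' + beta_G j'"
    by simp
qed (use x_assignment beta_G_nonneg beta_G_eq_0_if_slack in auto)

lemma beta_G_le_equilibrium_price:
  assumes eq: "is_equilibrium Dm F l D C x' \<beta>'" and "j \<in> F"
  shows "beta_G j \<le> \<beta>' j"
proof -
  define \<pi> where "\<pi> v = (case v of Root \<Rightarrow> 0 | FC j \<Rightarrow> \<beta>' j | Dem i \<Rightarrow> delay F l \<beta>' i)" for v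
  have potential: "\<pi> u \<le> \<pi> v + w" if "G u v = Some w" for u v w
    using that
  proof (cases rule: G_arcE)
    case (root j)
    with eq show ?thesis
      by (simp add: \<pi>_def is_equilibrium_def)
  next
    case (serve i)
    with min_cost_assignment_uses_cheapest[OF finite_Dm finite_F min_cost eq, of i "js i"]
    show ?thesis
      by (simp add: \<pi>_def js_in_F x_js D_pos)
  next
    case (switch i j)
    with delay_le[OF finite_F, of j l \<beta>' i] show ?thesis
      by (simp add: \<pi>_def)
  qed
  from min_path_weight_ge_potential_diff[OF finite_arc_heads_G path_Root_FC[OF \<open>j \<in> F\<close>], of \<pi>] potential
  show ?thesis
    by (simp add: \<pi>_def beta_G_def)
qed

lemma delta_G_le_equilibrium_delay:
  assumes eq: "is_equilibrium Dm F l D C x' \<beta>'" and "i \<in> Dm"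
  shows "delta_G i \<le> delay F l \<beta>' i"
proof -
  obtain j where "j \<in> F" and j: "delay F l \<beta>' i = l i j + \<beta>' j"
    using delay_attained[OF finite_F] js_in_F[OF \<open>i \<in> Dm\<close>] by (metis empty_iff)
  have "delta_G i \<le> l i j + beta_G j"
    using delta_G_le[OF \<open>i \<in> Dm\<close> \<open>j \<in> F\<close>] .
  also have "\<dots> \<le> l i j + \<beta>' j"
    using beta_G_le_equilibrium_price[OF eq \<open>j \<in> F\<close>] by simp
  finally show ?thesis
    by (simp add: j)
qed

lemma solution_delay_beta_G_le:
  assumes "is_equilibrium Dm F l D C x' \<beta>'"
  shows "solution_delay Dm F l D beta_G \<le> solution_delay Dm F l D \<beta>'"
  unfolding solution_delay_def
proof (rule sum_mono)
  fix i assume "i \<in> Dm"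
  have "delay F l beta_G i \<le> delay F l \<beta>' i"
    using delta_G_le_equilibrium_delay[OF assms \<open>i \<in> Dm\<close>] delta_G_eq_delay[OF \<open>i \<in> Dm\<close>] by simp
  with D_pos[OF \<open>i \<in> Dm\<close>] show "D i * delay F l beta_G i \<le> D i * delay F l \<beta>' i"
    by simp
qed

end

theorem theorem3p4:
  fixes Dm :: "'d set" and F :: "'f set"
    and l :: "'d \<Rightarrow> 'f \<Rightarrow> real" and D :: "'d \<Rightarrow> real" and C :: "'f \<Rightarrow> real"
    and x :: "'d \<Rightarrow> 'f \<Rightarrow> real" and js :: "'d \<Rightarrow> 'f"
    and \<beta> :: "'f \<Rightarrow> real" and \<delta> :: "'d \<Rightarrow> real"
  assumes finD: "finite Dm" and finF: "finite F"
    and l_nonneg: "\<forall>i\<in>Dm. \<forall>j\<in>F. 0 \<le> l i j"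
    and D_pos: "\<forall>i\<in>Dm. 0 < D i"
    and C_nonneg: "\<forall>j\<in>F. 0 \<le> C j"
    and total: "(\<Sum>i\<in>Dm. D i) \<le> (\<Sum>j\<in>F. C j)"
    and mincost: "is_min_cost_assignment Dm F l D C x"
    and single: "\<forall>i\<in>Dm. js i \<in> F \<and> x i (js i) = D i \<and> (\<forall>j\<in>F. j \<noteq> js i \<longrightarrow> x i j = 0)"
    and beta_def: "\<beta> = (\<lambda>j. - min_path_weight (Gx Dm F l js) Root (FC j))"
    and delta_def: "\<delta> = (\<lambda>i. - min_path_weight (Gx Dm F l js) Root (Dem i))"
  shows "no_negative_cycle (Gx Dm F l js)
    \<and> is_equilibrium Dm F l D C x \<beta>
    \<and> (\<forall>i\<in>Dm. \<delta> i = delay F l \<beta> i)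
    \<and> (\<forall>x' \<beta>'. is_equilibrium Dm F l D C x' \<beta>' \<longrightarrow> (\<forall>i\<in>Dm. \<delta> i \<le> delay F l \<beta>' i))
    \<and> (\<forall>x' \<beta>'. is_equilibrium Dm F l D C x' \<beta>' \<longrightarrow>
          solution_delay Dm F l D \<beta> \<le> solution_delay Dm F l D \<beta>')"
proof -
  interpret single_sourced_min_cost Dm F l D C x js
    using finD finF D_pos mincost single by unfold_locales auto
  have "\<beta> = beta_G" and "\<delta> = delta_G"
    by (simp_all add: beta_def delta_def beta_G_def delta_G_def fun_eq_iff)
  then show ?thesis
    using no_negative_cycle_G equilibrium_beta_G delta_G_eq_delay delta_G_le_equilibrium_delay
      solution_delay_beta_G_le by auto
qed

end
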